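(* Let $V$ be a quasi-regular mixed lattice vector space and $W$ a subset of $V$. Then $W$ is a regular quasi-ideal if and only if $W=A_{sp}-A_{sp}$ for some ideal $A$ of $V$.
   Context: A mixed lattice vector space is a real vector space $V$ with two partial orderings $\le$ (initial) and $\preceq$ (specific), each compatible with the vector space structure, such that for all $x,y$ the mixed lower envelope $x\curlywedge y=\max\{w: w\preceq x,\ w\le y\}$ and mixed upper envelope $x\curlyvee y=\min\{w: x\preceq w,\ y\le w\}$ exist (max/min with respect to $\le$). $V_p=\{x:0\le x\}$, $V_{sp}=\{x:0\preceq x\}$, $E_p=E\cap V_p$, $E_{sp}=E\cap V_{sp}$. $V$ is quasi-regular if $V_{sp}$ is closed under $\curlywedge,\curlyvee$. A mixed lattice subspace is a linear subspace closed under $\curlywedge,\curlyvee$. A subspace $S$ is regular if $S=S_{sp}-S_{sp}$. An ideal is a mixed lattice subspace that is $(\le)$-order convex ($x\le z\le y$ with $x,y$ in it implies $z$ in it). A quasi-ideal is a mixed lattice subspace $A$ such that $y\in A$ and $0\preceq x\le y$ imply $x\in A$. *)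

theory Defs
  imports Main "HOL-Analysis.Analysis"
begin

definition ordered_vs_rel :: "('a::real_vector \<Rightarrow> 'a \<Rightarrow> bool) \<Rightarrow> bool" where
  "ordered_vs_rel r \<longleftrightarrow>
     (\<forall>x. r x x) \<and>
     (\<forall>x y. r x y \<and> r y x \<longrightarrow> x = y) \<and>
     (\<forall>x y z. r x y \<and> r y z \<longrightarrow> r x z) \<and>
     (\<forall>x y z. r x y \<longrightarrow> r (x + z) (y + z)) \<and>
     (\<forall>x y (c::real). r x y \<and> 0 \<le> c \<longrightarrow> r (c *\<^sub>R x) (c *\<^sub>R y))"

definition mlow_set :: "('a \<Rightarrow> 'a \<Rightarrow> bool) \<Rightarrow> ('a \<Rightarrow> 'a \<Rightarrow> bool) \<Rightarrow> 'a \<Rightarrow> 'a \<Rightarrow> 'a set" where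
  "mlow_set le sle x y = {w. sle w x \<and> le w y}"

definition mupp_set :: "('a \<Rightarrow> 'a \<Rightarrow> bool) \<Rightarrow> ('a \<Rightarrow> 'a \<Rightarrow> bool) \<Rightarrow> 'a \<Rightarrow> 'a \<Rightarrow> 'a set" where
  "mupp_set le sle x y = {w. sle x w \<and> le y w}"

definition is_max_wrt :: "('a \<Rightarrow> 'a \<Rightarrow> bool) \<Rightarrow> 'a set \<Rightarrow> 'a \<Rightarrow> bool" where
  "is_max_wrt le S w \<longleftrightarrow> w \<in> S \<and> (\<forall>v\<in>S. le v w)"

definition is_min_wrt :: "('a \<Rightarrow> 'a \<Rightarrow> bool) \<Rightarrow> 'a set \<Rightarrow> 'a \<Rightarrow> bool" where
  "is_min_wrt le S w \<longleftrightarrow> w \<in> S \<and> (\<forall>v\<in>S. le w v)"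

definition mlow :: "('a \<Rightarrow> 'a \<Rightarrow> bool) \<Rightarrow> ('a \<Rightarrow> 'a \<Rightarrow> bool) \<Rightarrow> 'a \<Rightarrow> 'a \<Rightarrow> 'a" where
  "mlow le sle x y = (THE w. is_max_wrt le (mlow_set le sle x y) w)"

definition mupp :: "('a \<Rightarrow> 'a \<Rightarrow> bool) \<Rightarrow> ('a \<Rightarrow> 'a \<Rightarrow> bool) \<Rightarrow> 'a \<Rightarrow> 'a \<Rightarrow> 'a" where
  "mupp le sle x y = (THE w. is_min_wrt le (mupp_set le sle x y) w)"

text \<open>Mixed lattice vector space: le is the initial order, sle the specific order.\<close>
definition mixed_lattice_vs :: "('a::real_vector \<Rightarrow> 'a \<Rightarrow> bool) \<Rightarrow> ('a \<Rightarrow> 'a \<Rightarrow> bool) \<Rightarrow> bool" where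
  "mixed_lattice_vs le sle \<longleftrightarrow>
     ordered_vs_rel le \<and> ordered_vs_rel sle \<and>
     (\<forall>x y. \<exists>w. is_max_wrt le (mlow_set le sle x y) w) \<and>
     (\<forall>x y. \<exists>w. is_min_wrt le (mupp_set le sle x y) w)"

definition pos_part :: "('a::real_vector \<Rightarrow> 'a \<Rightarrow> bool) \<Rightarrow> 'a set \<Rightarrow> 'a set" where
  "pos_part r E = {x \<in> E. r 0 x}"

definition quasi_regular :: "('a::real_vector \<Rightarrow> 'a \<Rightarrow> bool) \<Rightarrow> ('a \<Rightarrow> 'a \<Rightarrow> bool) \<Rightarrow> bool" where
  "quasi_regular le sle \<longleftrightarrow>
     (\<forall>x y. sle 0 x \<and> sle 0 y \<longrightarrow> sle 0 (mlow le sle x y) \<and> sle 0 (mupp le sle x y))"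

definition mixed_lattice_subspace :: "('a::real_vector \<Rightarrow> 'a \<Rightarrow> bool) \<Rightarrow> ('a \<Rightarrow> 'a \<Rightarrow> bool) \<Rightarrow> 'a set \<Rightarrow> bool" where
  "mixed_lattice_subspace le sle S \<longleftrightarrow>
     subspace S \<and> (\<forall>x\<in>S. \<forall>y\<in>S. mlow le sle x y \<in> S \<and> mupp le sle x y \<in> S)"

definition diff_set :: "'a::real_vector set \<Rightarrow> 'a set" where
  "diff_set P = {a - b | a b. a \<in> P \<and> b \<in> P}"

definition regular_subspace :: "('a::real_vector \<Rightarrow> 'a \<Rightarrow> bool) \<Rightarrow> 'a set \<Rightarrow> bool" where
  "regular_subspace sle S \<longleftrightarrow> subspace S \<and> S = diff_set (pos_part sle S)"

definition mixed_ideal :: "('a::real_vector \<Rightarrow> 'a \<Rightarrow> bool) \<Rightarrow> ('a \<Rightarrow> 'a \<Rightarrow> bool) \<Rightarrow> 'a set \<Rightarrow> bool" where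
  "mixed_ideal le sle A \<longleftrightarrow> mixed_lattice_subspace le sle A \<and>
     (\<forall>x y z. x \<in> A \<and> y \<in> A \<and> le x z \<and> le z y \<longrightarrow> z \<in> A)"

definition quasi_ideal :: "('a::real_vector \<Rightarrow> 'a \<Rightarrow> bool) \<Rightarrow> ('a \<Rightarrow> 'a \<Rightarrow> bool) \<Rightarrow> 'a set \<Rightarrow> bool" where
  "quasi_ideal le sle A \<longleftrightarrow> mixed_lattice_subspace le sle A \<and>
     (\<forall>x y. y \<in> A \<and> sle 0 x \<and> le x y \<longrightarrow> x \<in> A)"

end

theory Submission
  imports Defs
begin

(* If W is a regular quasi-ideal, let A be the union of the order intervals [-u, u] with
   0 \<preceq> u \<in> W. Any two elements of A lie in a common [-w, w], so A is an order convex
   subspace, and x \<curlywedge> y lies between x - 2w and y while x \<curlyvee> y lies between y and x + 2w,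
   so A is an ideal. Quasi-regularity gives 0 \<preceq> u \<Longrightarrow> 0 \<le> u, hence W_sp \<subseteq> A, and the
   quasi-ideal property gives A_sp \<subseteq> W; thus A_sp = W_sp and W = A_sp - A_sp.
   Conversely, for an ideal A the set W = A_sp - A_sp is a subspace with W_sp = A_sp. The envelopes
   commute with translations, so for x = a - b and y = c - d the envelopes of x and y are those of
   a + d and c + b (elements of A_sp, which A_sp retains by quasi-regularity) shifted by -(b + d).
   Finally 0 \<preceq> x \<le> y \<in> W gives 0 \<le> x \<le> y, so x \<in> A by order convexity, i.e. x \<in> A_sp. *)

lemma ordered_vs_rel_refl: "ordered_vs_rel r \<Longrightarrow> r x x"
  unfolding ordered_vs_rel_def by blast

lemma ordered_vs_rel_antisym: "ordered_vs_rel r \<Longrightarrow> r x y \<Longrightarrow> r y x \<Longrightarrow> x = y"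
  unfolding ordered_vs_rel_def by blast

lemma ordered_vs_rel_trans: "ordered_vs_rel r \<Longrightarrow> r x y \<Longrightarrow> r y z \<Longrightarrow> r x z"
  unfolding ordered_vs_rel_def by blast

lemma ordered_vs_rel_add_right_iff:
  assumes "ordered_vs_rel r"
  shows "r (x + z) (y + z) \<longleftrightarrow> r x y"
proof
  assume "r (x + z) (y + z)"
  then have "r (x + z + - z) (y + z + - z)"
    using assms unfolding ordered_vs_rel_def by blast
  then show "r x y" by simp
qed (use assms in \<open>unfold ordered_vs_rel_def, blast\<close>)

lemma ordered_vs_rel_diff_right_iff:
  "ordered_vs_rel r \<Longrightarrow> r (x - z) (y - z) \<longleftrightarrow> r x y"
  using ordered_vs_rel_add_right_iff[of r x "- z" y] by simp

lemma ordered_vs_rel_iff_diff_nonneg: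
  "ordered_vs_rel r \<Longrightarrow> r x y \<longleftrightarrow> r 0 (y - x)"
  using ordered_vs_rel_add_right_iff[of r 0 x "y - x"] by simp

lemma ordered_vs_rel_add_mono:
  assumes "ordered_vs_rel r" "r a b" "r c d"
  shows "r (a + c) (b + d)"
proof -
  have "r (a + c) (b + c)" "r (c + b) (d + b)"
    using assms ordered_vs_rel_add_right_iff by blast+
  then show ?thesis
    using ordered_vs_rel_trans[OF assms(1)] by (simp add: add.commute)
qed

lemma ordered_vs_rel_neg_mono:
  assumes "ordered_vs_rel r" "r a b"
  shows "r (- b) (- a)"
proof -
  have "r (a + (- a - b)) (b + (- a - b))"
    using ordered_vs_rel_add_right_iff[OF assms(1)] assms(2) by blast
  then show ?thesis by simp
qed

lemma ordered_vs_rel_scale_mono: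
  "ordered_vs_rel r \<Longrightarrow> r a b \<Longrightarrow> 0 \<le> c \<Longrightarrow> r (c *\<^sub>R a) (c *\<^sub>R b)"
  unfolding ordered_vs_rel_def by blast

lemma ordered_vs_rel_nonneg_add:
  "ordered_vs_rel r \<Longrightarrow> r 0 a \<Longrightarrow> r 0 b \<Longrightarrow> r 0 (a + b)"
  using ordered_vs_rel_add_mono[of r 0 a 0 b] by simp

lemma ordered_vs_rel_nonneg_scale:
  "ordered_vs_rel r \<Longrightarrow> r 0 a \<Longrightarrow> 0 \<le> c \<Longrightarrow> r 0 (c *\<^sub>R a)"
  using ordered_vs_rel_scale_mono[of r 0 a c] by simp

lemma pos_part_subset: "pos_part r S \<subseteq> S"
  unfolding pos_part_def by blast

lemma pos_part_mono: "S \<subseteq> T \<Longrightarrow> pos_part r S \<subseteq> pos_part r T"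
  unfolding pos_part_def by blast

lemma pos_part_idem: "pos_part r (pos_part r S) = pos_part r S"
  unfolding pos_part_def by blast

lemma zero_in_pos_part: "ordered_vs_rel r \<Longrightarrow> subspace S \<Longrightarrow> 0 \<in> pos_part r S"
  unfolding pos_part_def by (simp add: ordered_vs_rel_refl subspace_0)

lemma pos_part_add:
  "ordered_vs_rel r \<Longrightarrow> subspace S \<Longrightarrow> a \<in> pos_part r S \<Longrightarrow> b \<in> pos_part r S
    \<Longrightarrow> a + b \<in> pos_part r S"
  unfolding pos_part_def by (simp add: ordered_vs_rel_nonneg_add subspace_add)

lemma pos_part_scale:
  "ordered_vs_rel r \<Longrightarrow> subspace S \<Longrightarrow> a \<in> pos_part r S \<Longrightarrow> 0 \<le> c
    \<Longrightarrow> c *\<^sub>R a \<in> pos_part r S"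
  unfolding pos_part_def by (simp add: ordered_vs_rel_nonneg_scale subspace_scale)

lemma diff_setI: "a \<in> P \<Longrightarrow> b \<in> P \<Longrightarrow> a - b \<in> diff_set P"
  unfolding diff_set_def by blast

lemma diff_setE:
  assumes "x \<in> diff_set P"
  obtains a b where "x = a - b" "a \<in> P" "b \<in> P"
  using assms unfolding diff_set_def by blast

lemma subset_diff_set: "0 \<in> P \<Longrightarrow> P \<subseteq> diff_set P"
  using diff_setI[of _ P 0] by auto

lemma diff_set_subset: "subspace S \<Longrightarrow> P \<subseteq> S \<Longrightarrow> diff_set P \<subseteq> S"
  by (auto elim!: diff_setE intro: subspace_diff)

lemma subspace_diff_set_cone:
  assumes zero: "0 \<in> P"
    and add: "\<And>a b. a \<in> P \<Longrightarrow> b \<in> P \<Longrightarrow> a + b \<in> P"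
    and scale: "\<And>a c. a \<in> P \<Longrightarrow> 0 \<le> c \<Longrightarrow> c *\<^sub>R a \<in> P"
  shows "subspace (diff_set P)"
  unfolding subspace_def
proof (intro conjI ballI allI)
  show "0 \<in> diff_set P" using diff_setI[OF zero zero] by simp
next
  fix x y assume "x \<in> diff_set P" "y \<in> diff_set P"
  then obtain a b c d where xy: "x = a - b" "y = c - d"
    and "a \<in> P" "b \<in> P" "c \<in> P" "d \<in> P"
    by (metis diff_setE)
  then have "(a + c) - (b + d) \<in> diff_set P" by (simp add: add diff_setI)
  moreover have "(a + c) - (b + d) = x + y" unfolding xy by simp
  ultimately show "x + y \<in> diff_set P" by simp
next
  fix c :: real and x assume "x \<in> diff_set P"
  then obtain a b where ab: "x = a - b" "a \<in> P" "b \<in> P" by (rule diff_setE)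
  show "c *\<^sub>R x \<in> diff_set P"
  proof (cases "0 \<le> c")
    case True
    then have "c *\<^sub>R a - c *\<^sub>R b \<in> diff_set P" by (simp add: ab scale diff_setI)
    then show ?thesis by (simp add: ab(1) scaleR_diff_right)
  next
    case False
    then have "0 \<le> - c" by simp
    then have "(- c) *\<^sub>R b \<in> P" "(- c) *\<^sub>R a \<in> P" using ab(2,3) scale by blast+
    then have "(- c) *\<^sub>R b - (- c) *\<^sub>R a \<in> diff_set P" by (rule diff_setI)
    then show ?thesis by (simp add: ab(1) scaleR_diff_right)
  qed
qed

lemma pos_part_diff_set_pos_part:
  assumes "ordered_vs_rel r" "subspace A"
  shows "pos_part r (diff_set (pos_part r A)) = pos_part r A"
proof (rule antisym)
  have "diff_set (pos_part r A) \<subseteq> A"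
    using diff_set_subset[OF assms(2) pos_part_subset] .
  then show "pos_part r (diff_set (pos_part r A)) \<subseteq> pos_part r A"
    by (rule pos_part_mono)
  have "pos_part r A \<subseteq> diff_set (pos_part r A)"
    using subset_diff_set[OF zero_in_pos_part[OF assms]] .
  then show "pos_part r A \<subseteq> pos_part r (diff_set (pos_part r A))"
    using pos_part_mono pos_part_idem by metis
qed

lemma subspace_diff_set_pos_part:
  assumes "ordered_vs_rel r" "subspace A"
  shows "subspace (diff_set (pos_part r A))"
  using subspace_diff_set_cone zero_in_pos_part[OF assms] pos_part_add[OF assms]
    pos_part_scale[OF assms] by blast

lemma regular_subspace_diff_set_pos_part:
  assumes "ordered_vs_rel r" "subspace A"
  shows "regular_subspace r (diff_set (pos_part r A))"
  unfolding regular_subspace_def pos_part_diff_set_pos_part[OF assms]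
  using subspace_diff_set_pos_part[OF assms] by blast

lemma the_is_max_wrt:
  "ordered_vs_rel le \<Longrightarrow> is_max_wrt le S w \<Longrightarrow> (THE w. is_max_wrt le S w) = w"
  unfolding is_max_wrt_def by (blast intro: ordered_vs_rel_antisym)

lemma the_is_min_wrt:
  "ordered_vs_rel le \<Longrightarrow> is_min_wrt le S w \<Longrightarrow> (THE w. is_min_wrt le S w) = w"
  unfolding is_min_wrt_def by (blast intro: ordered_vs_rel_antisym)

locale mixed_lattice_space =
  fixes le sle :: "'a::real_vector \<Rightarrow> 'a \<Rightarrow> bool"
  assumes mixed_lattice: "mixed_lattice_vs le sle"
begin

lemma le_ordered: "ordered_vs_rel le"
  and sle_ordered: "ordered_vs_rel sle"
  using mixed_lattice unfolding mixed_lattice_vs_def by blast+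

lemma mlow_is_max: "is_max_wrt le (mlow_set le sle x y) (mlow le sle x y)"
proof -
  obtain w where "is_max_wrt le (mlow_set le sle x y) w"
    using mixed_lattice unfolding mixed_lattice_vs_def by blast
  then show ?thesis unfolding mlow_def using the_is_max_wrt[OF le_ordered] by simp
qed

lemma mupp_is_min: "is_min_wrt le (mupp_set le sle x y) (mupp le sle x y)"
proof -
  obtain w where "is_min_wrt le (mupp_set le sle x y) w"
    using mixed_lattice unfolding mixed_lattice_vs_def by blast
  then show ?thesis unfolding mupp_def using the_is_min_wrt[OF le_ordered] by simp
qed

lemma mlow_sle_left: "sle (mlow le sle x y) x"
  and mlow_le_right: "le (mlow le sle x y) y"
  and mlow_greatest: "sle w x \<Longrightarrow> le w y \<Longrightarrow> le w (mlow le sle x y)"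
  using mlow_is_max[of x y] unfolding is_max_wrt_def mlow_set_def by auto

lemma mupp_sle_left: "sle x (mupp le sle x y)"
  and mupp_le_right: "le y (mupp le sle x y)"
  and mupp_least: "sle x w \<Longrightarrow> le y w \<Longrightarrow> le (mupp le sle x y) w"
  using mupp_is_min[of x y] unfolding is_min_wrt_def mupp_set_def by auto

lemma mlow_add_right: "mlow le sle (x + z) (y + z) = mlow le sle x y + z"
proof (rule ordered_vs_rel_antisym[OF le_ordered])
  have "le (mlow le sle (x + z) (y + z) - z + z) (mlow le sle x y + z)"
    unfolding ordered_vs_rel_add_right_iff[OF le_ordered]
  proof (rule mlow_greatest)
    show "sle (mlow le sle (x + z) (y + z) - z) x"
      using mlow_sle_left ordered_vs_rel_diff_right_iff[OF sle_ordered, of _ z "x + z"]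
      by simp
    show "le (mlow le sle (x + z) (y + z) - z) y"
      using mlow_le_right ordered_vs_rel_diff_right_iff[OF le_ordered, of _ z "y + z"]
      by simp
  qed
  then show "le (mlow le sle (x + z) (y + z)) (mlow le sle x y + z)" by simp
  show "le (mlow le sle x y + z) (mlow le sle (x + z) (y + z))"
    by (intro mlow_greatest)
      (simp_all add: ordered_vs_rel_add_right_iff[OF sle_ordered]
        ordered_vs_rel_add_right_iff[OF le_ordered] mlow_sle_left mlow_le_right)
qed

lemma mupp_add_right: "mupp le sle (x + z) (y + z) = mupp le sle x y + z"
proof (rule ordered_vs_rel_antisym[OF le_ordered])
  show "le (mupp le sle (x + z) (y + z)) (mupp le sle x y + z)"
    by (intro mupp_least)
      (simp_all add: ordered_vs_rel_add_right_iff[OF sle_ordered]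
        ordered_vs_rel_add_right_iff[OF le_ordered] mupp_sle_left mupp_le_right)
  have "le (mupp le sle x y + z) (mupp le sle (x + z) (y + z) - z + z)"
    unfolding ordered_vs_rel_add_right_iff[OF le_ordered]
  proof (rule mupp_least)
    show "sle x (mupp le sle (x + z) (y + z) - z)"
      using mupp_sle_left ordered_vs_rel_diff_right_iff[OF sle_ordered, of "x + z" z]
      by simp
    show "le y (mupp le sle (x + z) (y + z) - z)"
      using mupp_le_right ordered_vs_rel_diff_right_iff[OF le_ordered, of "y + z" z]
      by simp
  qed
  then show "le (mupp le sle x y + z) (mupp le sle (x + z) (y + z))" by simp
qed

definition interval_hull :: "'a set \<Rightarrow> 'a set" where
  "interval_hull W = {x. \<exists>u \<in> pos_part sle W. le (- u) x \<and> le x u}"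

lemma subspace_interval_hull:
  assumes W: "subspace W"
  shows "subspace (interval_hull W)"
  unfolding subspace_def
proof (intro conjI ballI allI)
  show "0 \<in> interval_hull W"
    unfolding interval_hull_def using zero_in_pos_part[OF sle_ordered W]
    by (intro CollectI bexI[of _ 0]) (simp_all add: ordered_vs_rel_refl[OF le_ordered])
next
  fix x y assume "x \<in> interval_hull W" "y \<in> interval_hull W"
  then obtain u v where u: "u \<in> pos_part sle W" "le (- u) x" "le x u"
    and v: "v \<in> pos_part sle W" "le (- v) y" "le y v"
    unfolding interval_hull_def by blast
  have "le (- u + - v) (x + y)" "le (x + y) (u + v)"
    using u v ordered_vs_rel_add_mono[OF le_ordered] by blast+
  then have "le (- (u + v)) (x + y)" "le (x + y) (u + v)"
    by (simp_all only: minus_add_distrib)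
  then show "x + y \<in> interval_hull W"
    using pos_part_add[OF sle_ordered W u(1) v(1)] unfolding interval_hull_def by blast
next
  fix c :: real and x assume "x \<in> interval_hull W"
  then obtain u where u: "u \<in> pos_part sle W" "le (- u) x" "le x u"
    unfolding interval_hull_def by blast
  obtain x' where x': "le (- u) x'" "le x' u" "c *\<^sub>R x = \<bar>c\<bar> *\<^sub>R x'"
  proof (cases "0 \<le> c")
    case True
    show ?thesis by (rule that[OF u(2,3)]) (simp add: True)
  next
    case False
    then have "\<bar>c\<bar> = - c" by simp
    moreover have "le (- u) (- x)" "le (- x) u"
      using ordered_vs_rel_neg_mono[OF le_ordered u(3)]
        ordered_vs_rel_neg_mono[OF le_ordered u(2)] by simp_all
    ultimately show ?thesis using that by simp
  qed
  have "le (\<bar>c\<bar> *\<^sub>R - u) (\<bar>c\<bar> *\<^sub>R x')" "le (\<bar>c\<bar> *\<^sub>R x') (\<bar>c\<bar> *\<^sub>R u)"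
    using ordered_vs_rel_scale_mono[OF le_ordered x'(1), of "\<bar>c\<bar>"]
      ordered_vs_rel_scale_mono[OF le_ordered x'(2), of "\<bar>c\<bar>"] by simp_all
  then have "le (- (\<bar>c\<bar> *\<^sub>R u)) (c *\<^sub>R x)" "le (c *\<^sub>R x) (\<bar>c\<bar> *\<^sub>R u)"
    by (simp_all add: x'(3))
  then show "c *\<^sub>R x \<in> interval_hull W"
    using pos_part_scale[OF sle_ordered W u(1)] unfolding interval_hull_def by force
qed

end

locale quasi_regular_space = mixed_lattice_space +
  assumes quasi_regular: "quasi_regular le sle"
begin

lemma sle_nonneg_imp_le_nonneg:
  assumes "sle 0 x"
  shows "le 0 x"
proof -
  have "sle 0 (mlow le sle 0 x)"
    using quasi_regular assms ordered_vs_rel_refl[OF sle_ordered]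
    unfolding quasi_regular_def by blast
  then have "mlow le sle 0 x = 0"
    using mlow_sle_left ordered_vs_rel_antisym[OF sle_ordered] by blast
  then show ?thesis using mlow_le_right[of 0 x] by simp
qed

lemma pos_part_subset_interval_hull: "pos_part sle W \<subseteq> interval_hull W"
proof
  fix u assume u: "u \<in> pos_part sle W"
  then have "le 0 u" using sle_nonneg_imp_le_nonneg unfolding pos_part_def by blast
  then have "le (- u) u"
    using ordered_vs_rel_trans[OF le_ordered] ordered_vs_rel_neg_mono[OF le_ordered] by fastforce
  then show "u \<in> interval_hull W"
    using u ordered_vs_rel_refl[OF le_ordered] unfolding interval_hull_def by blast
qed

lemma interval_hull_common_bound:
  assumes "subspace W" "x \<in> interval_hull W" "y \<in> interval_hull W"
  obtains w where "w \<in> pos_part sle W" "le (- w) x" "le x w" "le (- w) y" "le y w"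
proof -
  obtain u v where u: "u \<in> pos_part sle W" "le (- u) x" "le x u"
    and v: "v \<in> pos_part sle W" "le (- v) y" "le y v"
    using assms(2,3) unfolding interval_hull_def by blast
  have widen: "le (- (a + b)) z \<and> le z (a + b)"
    if "b \<in> pos_part sle W" "le (- a) z" "le z a" for a b z
  proof -
    have "le 0 b" using that(1) sle_nonneg_imp_le_nonneg unfolding pos_part_def by blast
    then have "le (- a + - b) (z + 0)" "le (z + 0) (a + b)"
      using that(2,3) ordered_vs_rel_add_mono[OF le_ordered] ordered_vs_rel_neg_mono[OF le_ordered]
      by fastforce+
    then show ?thesis by (simp add: add.commute)
  qed
  have "u + v \<in> pos_part sle W"
    using pos_part_add[OF sle_ordered assms(1) u(1) v(1)] .
  moreover have "le (- (u + v)) x \<and> le x (u + v)" using widen u v by blast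
  moreover have "le (- (v + u)) y \<and> le y (v + u)" using widen u v by blast
  ultimately show ?thesis using that by (simp add: add.commute)
qed

lemma interval_hull_order_convex:
  assumes "subspace W" "x \<in> interval_hull W" "y \<in> interval_hull W" "le x z" "le z y"
  shows "z \<in> interval_hull W"
proof -
  obtain w where "w \<in> pos_part sle W" "le (- w) x" "le y w"
    using interval_hull_common_bound[OF assms(1-3)] by metis
  then show ?thesis
    using assms(4,5) ordered_vs_rel_trans[OF le_ordered] unfolding interval_hull_def by blast
qed

lemma interval_hull_mlow_mupp:
  assumes W: "subspace W" and x: "x \<in> interval_hull W" and y: "y \<in> interval_hull W"
  shows "mlow le sle x y \<in> interval_hull W \<and> mupp le sle x y \<in> interval_hull W"
proof -
  obtain w where w: "w \<in> pos_part sle W" "le (- w) x" "le x w" "le (- w) y" "le y w"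
    using interval_hull_common_bound[OF W x y] by metis
  have ww: "w + w \<in> pos_part sle W" using pos_part_add[OF sle_ordered W w(1) w(1)] .
  then have "sle 0 (w + w)" unfolding pos_part_def by blast
  then have sle_shift: "sle (x - (w + w)) x" "sle x (x + (w + w))"
    using ordered_vs_rel_iff_diff_nonneg[OF sle_ordered, of "x - (w + w)" x]
      ordered_vs_rel_iff_diff_nonneg[OF sle_ordered, of x "x + (w + w)"] by simp_all
  have "le (x - (w + w)) (w - (w + w))"
    unfolding ordered_vs_rel_diff_right_iff[OF le_ordered] by (rule w(3))
  then have "le (x - (w + w)) y"
    using ordered_vs_rel_trans[OF le_ordered _ w(4)] by simp
  moreover have "le (- w + (w + w)) (x + (w + w))"
    unfolding ordered_vs_rel_add_right_iff[OF le_ordered] by (rule w(2))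
  then have "le y (x + (w + w))"
    using ordered_vs_rel_trans[OF le_ordered w(5)] by simp
  ultimately have le_shift: "le (x - (w + w)) y" "le y (x + (w + w))" .
  have hull: "subspace (interval_hull W)" using subspace_interval_hull[OF W] .
  have "w + w \<in> interval_hull W" using ww pos_part_subset_interval_hull by blast
  then have ends: "x - (w + w) \<in> interval_hull W" "x + (w + w) \<in> interval_hull W"
    using x subspace_diff[OF hull] subspace_add[OF hull] by blast+
  have "le (x - (w + w)) (mlow le sle x y)"
    using mlow_greatest sle_shift(1) le_shift(1) by blast
  then have "mlow le sle x y \<in> interval_hull W"
    using interval_hull_order_convex[OF W ends(1) y] mlow_le_right by blast
  moreover have "le (mupp le sle x y) (x + (w + w))"
    using mupp_least sle_shift(2) le_shift(2) by blast
  then have "mupp le sle x y \<in> interval_hull W"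
    using interval_hull_order_convex[OF W y ends(2)] mupp_le_right by blast
  ultimately show ?thesis ..
qed

lemma mixed_ideal_interval_hull:
  "subspace W \<Longrightarrow> mixed_ideal le sle (interval_hull W)"
  unfolding mixed_ideal_def mixed_lattice_subspace_def
  using subspace_interval_hull interval_hull_mlow_mupp interval_hull_order_convex by blast

lemma pos_part_interval_hull:
  assumes "quasi_ideal le sle W"
  shows "pos_part sle (interval_hull W) = pos_part sle W"
proof
  show "pos_part sle W \<subseteq> pos_part sle (interval_hull W)"
    using pos_part_subset_interval_hull unfolding pos_part_def by blast
  show "pos_part sle (interval_hull W) \<subseteq> pos_part sle W"
  proof
    fix x assume "x \<in> pos_part sle (interval_hull W)"
    then obtain u where "sle 0 x" "u \<in> W" "le x u"
      unfolding pos_part_def interval_hull_def by blast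
    then show "x \<in> pos_part sle W"
      using assms unfolding quasi_ideal_def pos_part_def by blast
  qed
qed

lemma mixed_lattice_subspace_diff_set_pos_part:
  assumes A: "mixed_lattice_subspace le sle A"
  shows "mixed_lattice_subspace le sle (diff_set (pos_part sle A))"
proof -
  have sub: "subspace A"
    and A_closed: "\<And>x y. x \<in> A \<Longrightarrow> y \<in> A \<Longrightarrow> mlow le sle x y \<in> A \<and> mupp le sle x y \<in> A"
    using A unfolding mixed_lattice_subspace_def by blast+
  have pos_closed: "mlow le sle x y \<in> pos_part sle A \<and> mupp le sle x y \<in> pos_part sle A"
    if "x \<in> pos_part sle A" "y \<in> pos_part sle A" for x y
    using that A_closed quasi_regular unfolding pos_part_def quasi_regular_def by blast
  have "mlow le sle x y \<in> diff_set (pos_part sle A) \<and> mupp le sle x y \<in> diff_set (pos_part sle A)"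
    if x_in: "x \<in> diff_set (pos_part sle A)" and y_in: "y \<in> diff_set (pos_part sle A)"
    for x y
  proof -
    obtain a b where x: "x = a - b" "a \<in> pos_part sle A" "b \<in> pos_part sle A"
      using x_in by (rule diff_setE)
    obtain c d where y: "y = c - d" "c \<in> pos_part sle A" "d \<in> pos_part sle A"
      using y_in by (rule diff_setE)
    define s where "s = b + d"
    have shifted: "x + s = a + d" "y + s = c + b" unfolding s_def x(1) y(1) by simp_all
    have s: "s \<in> pos_part sle A"
      unfolding s_def using pos_part_add[OF sle_ordered sub] x y by blast
    have "a + d \<in> pos_part sle A" "c + b \<in> pos_part sle A"
      using pos_part_add[OF sle_ordered sub] x y by blast+
    then have "mlow le sle (x + s) (y + s) - s \<in> diff_set (pos_part sle A)"
      "mupp le sle (x + s) (y + s) - s \<in> diff_set (pos_part sle A)"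
      unfolding shifted using pos_closed s diff_setI by blast+
    then show ?thesis unfolding mlow_add_right mupp_add_right by simp
  qed
  then show ?thesis
    unfolding mixed_lattice_subspace_def
    using subspace_diff_set_pos_part[OF sle_ordered sub] by blast
qed

lemma quasi_ideal_diff_set_pos_part:
  assumes A: "mixed_ideal le sle A"
  shows "quasi_ideal le sle (diff_set (pos_part sle A))"
proof -
  have mls: "mixed_lattice_subspace le sle A"
    and convex: "\<And>x y z. x \<in> A \<Longrightarrow> y \<in> A \<Longrightarrow> le x z \<Longrightarrow> le z y \<Longrightarrow> z \<in> A"
    using A unfolding mixed_ideal_def by blast+
  have sub: "subspace A" using mls unfolding mixed_lattice_subspace_def by blast
  have "x \<in> diff_set (pos_part sle A)"
    if y_in: "y \<in> diff_set (pos_part sle A)" and x_pos: "sle 0 x" and "le x y" for x y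
  proof -
    have "y \<in> A" using diff_set_subset[OF sub pos_part_subset] y_in by blast
    then have "x \<in> A"
      using convex[OF subspace_0[OF sub]] sle_nonneg_imp_le_nonneg[OF x_pos] \<open>le x y\<close>
      by blast
    then have "x \<in> pos_part sle A" unfolding pos_part_def using x_pos by blast
    then show ?thesis using subset_diff_set[OF zero_in_pos_part[OF sle_ordered sub]] by blast
  qed
  then show ?thesis
    unfolding quasi_ideal_def using mixed_lattice_subspace_diff_set_pos_part[OF mls] by blast
qed

end

theorem theorem4p15:
  fixes le sle :: "'a::real_vector \<Rightarrow> 'a \<Rightarrow> bool" and W :: "'a set"
  assumes "mixed_lattice_vs le sle"
    and "quasi_regular le sle"
  shows "(regular_subspace sle W \<and> quasi_ideal le sle W) \<longleftrightarrow>
         (\<exists>A. mixed_ideal le sle A \<and> W = diff_set (pos_part sle A))"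
proof -
  interpret quasi_regular_space le sle
    using assms by unfold_locales
  show ?thesis
  proof
    assume "regular_subspace sle W \<and> quasi_ideal le sle W"
    then have "mixed_ideal le sle (interval_hull W)"
      and "W = diff_set (pos_part sle (interval_hull W))"
      using mixed_ideal_interval_hull pos_part_interval_hull unfolding regular_subspace_def by auto
    then show "\<exists>A. mixed_ideal le sle A \<and> W = diff_set (pos_part sle A)" by blast
  next
    assume "\<exists>A. mixed_ideal le sle A \<and> W = diff_set (pos_part sle A)"
    then obtain A where A: "mixed_ideal le sle A" and W: "W = diff_set (pos_part sle A)"
      by blast
    have "subspace A" using A unfolding mixed_ideal_def mixed_lattice_subspace_def by blast
    then show "regular_subspace sle W \<and> quasi_ideal le sle W"
      unfolding W using regular_subspace_diff_set_pos_part[OF sle_ordered]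
        quasi_ideal_diff_set_pos_part[OF A] by blast
  qed
qed

end
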